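(* Let $G$ be a tree on $k$ vertices, $n\ge 1$, $e=(s,t)$ an edge of $G$, and $C$ an $e$-cycle of $\Gamma^G_n$ of length $2^i$ (with $2\le i\le n$), whose vertices are the words $xw$ with $x\in\{s,t\}^i$ and $w$ a fixed word of length $n-i$. Let $\{u,v\}$ be an edge of $C$ other than the two special edges $e_C=\{s^iw,t^iw\}$ and $e_C'=\{s^{i-1}tw,\,t^{i-1}sw\}$. Then $$n(u,v)\,n(v,u)=k^{i-1}\left(k^n-k^{i-1}\right).$$
   Context: Let $G=(V,E)$ be a finite tree with vertex set $V$ of size $k$, and fix an orientation of each edge, so that each edge becomes an ordered pair $e=(s,t)$. Each oriented edge $e=(s,t)$ acts on the set $V^*$ of finite words over the alphabet $V$ by the recursive rule: $e(\emptyset)=\emptyset$, $e(sw)=t\,e(w)$, $e(tw)=sw$, and $e(xw)=xw$ for $x\in V\setminus\{s,t\}$ (words are read left to right, $w\in V^*$). This action preserves word length. For $n\ge 1$, the Schreier graph $\Gamma_n^G$ is the multigraph with vertex set $V^n$ having, for each $u\in V^n$ and each oriented edge $e$ of $G$, one edge joining $u$ and $e(u)$, labelled $e$ (a loop if $e(u)=u$). For an edge $e$ of $G$, the $e$-cycles of $\Gamma_n^G$ are the subgraphs formed by an orbit of $e$ on $V^n$ together with the edges labelled $e$ between its vertices; an orbit of size $m$ gives an $e$-cycle of length $m$. An $e$-cycle of length $2^i$ consists of the words $xw$, $x\in\{s,t\}^i$, for a fixed suffix $w$ of length $n-i$ whose first letter (if any) is not in $\{s,t\}$. For vertices $u,v$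 of $\Gamma_n^G$, $n(u,v)$ is the number of vertices of $\Gamma_n^G$ strictly closer (in graph distance) to $u$ than to $v$. *)

theory Defs
  imports Main
begin

definition und_edges :: "('a \<times> 'a) set \<Rightarrow> ('a \<times> 'a) set" where
  "und_edges E = E \<union> converse E"

definition oriented_tree :: "'a set \<Rightarrow> ('a \<times> 'a) set \<Rightarrow> bool" where
  "oriented_tree V E \<longleftrightarrow> finite V \<and> V \<noteq> {} \<and> E \<subseteq> V \<times> V
     \<and> (\<forall>(s,t)\<in>E. s \<noteq> t \<and> (t,s) \<notin> E)
     \<and> (\<forall>x\<in>V. \<forall>y\<in>V. (x,y) \<in> (und_edges E)\<^sup>*)
     \<and> card E + 1 = card V"

fun act :: "'a \<times> 'a \<Rightarrow> 'a list \<Rightarrow> 'a list" where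
  "act e [] = []"
| "act (s,t) (x # w) =
     (if x = s then t # act (s,t) w else if x = t then s # w else x # w)"

definition words :: "'a set \<Rightarrow> nat \<Rightarrow> 'a list set" where
  "words V n = {w. length w = n \<and> set w \<subseteq> V}"

text \<open>Adjacency in the Schreier graph \<Gamma>_n (loops and multiplicities are irrelevant for distances).\<close>
definition schreier_adj :: "'a set \<Rightarrow> ('a \<times> 'a) set \<Rightarrow> nat \<Rightarrow> ('a list \<times> 'a list) set" where
  "schreier_adj V E n = {(u,v). u \<in> words V n \<and> v \<in> words V n \<and>
      (\<exists>e\<in>E. act e u = v \<or> act e v = u)}"

definition sdist :: "'a set \<Rightarrow> ('a \<times> 'a) set \<Rightarrow> nat \<Rightarrow> 'a list \<Rightarrow> 'a list \<Rightarrow> nat" where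
  "sdist V E n u v = (LEAST m. (u,v) \<in> (schreier_adj V E n) ^^ m)"

definition ncloser :: "'a set \<Rightarrow> ('a \<times> 'a) set \<Rightarrow> nat \<Rightarrow> 'a list \<Rightarrow> 'a list \<Rightarrow> nat" where
  "ncloser V E n u v = card {z \<in> words V n. sdist V E n z u < sdist V E n z v}"

end

theory Submission
  imports Defs
begin

text \<open>Deleting the edge e = (s,t) splits the tree into the side of s and the side of t. This
  two-colouring of the vertices defines a projection of \<open>\<Gamma>\<^sub>n\<close> onto the e-cycle
  \<open>C = {s,t}\<^sup>i w\<close> that is changed only by the edges of C itself, which gives
  \<open>d(z,c) = d(z,\<pi> z) + d\<^sub>C(\<pi> z,c)\<close> for every word z and every c on C. Reading the
  \<open>{s,t}\<close>-prefix as a binary numeral, e acts on C as \<open>+1 mod 2\<^sup>i\<close>; as C has even length,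
  z is strictly closer to u than to v = e(u) or strictly closer to v, according to which half of C
  contains \<open>\<pi> z\<close>. Every word other than the words \<open>y a w\<close> with \<open>a \<in> {s,t}\<close> projects onto
  an endpoint of \<open>e\<^sub>C\<close>, and \<open>y s w\<close>, \<open>y t w\<close> project to antipodal vertices. Unless
  {u,v} is \<open>e\<^sub>C\<close> or \<open>e\<^sub>C'\<close>, one of the two halves contains both endpoints of \<open>e\<^sub>C\<close>,
  so the other one receives exactly one of \<open>y s w\<close>, \<open>y t w\<close> for each of the
  \<open>k\<^sup>i\<^sup>-\<^sup>1\<close> words y, and nothing else.\<close>

section \<open>Distance on a cycle\<close>

text \<open>For \<open>a, b < N\<close>, \<open>cyc_offset N a b = (a - b) mod N\<close>, and \<open>cyc_dist N\<close> is the
  distance in the cycle graph on \<open>{0..<N}\<close>.\<close>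
definition cyc_offset :: "nat \<Rightarrow> nat \<Rightarrow> nat \<Rightarrow> nat" where
  "cyc_offset N a b = (if b \<le> a then a - b else a + N - b)"

definition cyc_dist :: "nat \<Rightarrow> nat \<Rightarrow> nat \<Rightarrow> nat" where
  "cyc_dist N a b = min (cyc_offset N a b) (cyc_offset N b a)"

lemma cyc_dist_self [simp]: "cyc_dist N a a = 0"
  by (simp add: cyc_dist_def cyc_offset_def)

lemma cyc_offset_less: "a < N \<Longrightarrow> b < N \<Longrightarrow> cyc_offset N a b < N"
  by (auto simp: cyc_offset_def)

lemma add_cyc_offset_mod: "a < N \<Longrightarrow> b < N \<Longrightarrow> (b + cyc_offset N a b) mod N = a"
  by (auto simp: cyc_offset_def le_mod_geq)

lemma cyc_dist_eq: "a < N \<Longrightarrow> b < N \<Longrightarrow> cyc_dist N a b = min (cyc_offset N a b) (N - cyc_offset N a b)"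
  by (auto simp: cyc_dist_def cyc_offset_def)

lemma cyc_offset_Suc_mod_left:
  "a < N \<Longrightarrow> b < N \<Longrightarrow>
     cyc_offset N (Suc a mod N) b = (if Suc (cyc_offset N a b) = N then 0 else Suc (cyc_offset N a b))"
  by (auto simp: cyc_offset_def mod_Suc)

lemma cyc_offset_Suc_mod_right:
  "a < N \<Longrightarrow> b < N \<Longrightarrow>
     cyc_offset N a (Suc b mod N) = (if cyc_offset N a b = 0 then N - 1 else cyc_offset N a b - 1)"
  by (auto simp: cyc_offset_def mod_Suc)

lemma cyc_dist_Suc_mod_le:
  assumes "a < N" "b < N"
  shows "cyc_dist N (Suc a mod N) b \<le> Suc (cyc_dist N a b)"
    and "cyc_dist N a b \<le> Suc (cyc_dist N (Suc a mod N) b)"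
  using assms cyc_offset_less[OF assms]
  by (auto simp: cyc_dist_eq cyc_offset_Suc_mod_left min_def)

lemma cyc_dist_Suc_mod_less_iff:
  assumes N: "N = 2 * h" and ab: "a < N" "b < N"
  shows "cyc_dist N a b < cyc_dist N a (Suc b mod N) \<longleftrightarrow> cyc_offset N b a < h"
    and "cyc_dist N a (Suc b mod N) < cyc_dist N a b \<longleftrightarrow> h \<le> cyc_offset N b a"
proof -
  define D where "D = cyc_offset N a b"
  have "D < N" unfolding D_def using cyc_offset_less[OF ab] .
  have "2 \<le> N" using N ab by presburger
  have offset_swap: "cyc_offset N b a = (if D = 0 then 0 else N - D)"
    using ab by (auto simp: cyc_offset_def D_def)
  have dist: "cyc_dist N a b = min D (N - D)"
    using ab by (simp add: cyc_dist_eq D_def)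
  have dist_Suc: "cyc_dist N a (Suc b mod N) = (if D = 0 then 1 else min (D - 1) (N + 1 - D))"
    using ab \<open>D < N\<close> \<open>2 \<le> N\<close>
    by (auto simp: cyc_dist_eq cyc_offset_Suc_mod_right D_def min_def)
  show "cyc_dist N a b < cyc_dist N a (Suc b mod N) \<longleftrightarrow> cyc_offset N b a < h"
    unfolding offset_swap dist dist_Suc using N \<open>D < N\<close> \<open>2 \<le> N\<close>
    by (cases "D = 0") (simp_all add: min_def, arith)
  show "cyc_dist N a (Suc b mod N) < cyc_dist N a b \<longleftrightarrow> h \<le> cyc_offset N b a"
    unfolding offset_swap dist dist_Suc using N \<open>D < N\<close> \<open>2 \<le> N\<close>
    by (cases "D = 0") (simp_all add: min_def, arith)
qed

lemma cyc_offset_add_half_less_iff: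
  "N = 2 * h \<Longrightarrow> a < h \<Longrightarrow> b < N \<Longrightarrow> cyc_offset N b (a + h) < h \<longleftrightarrow> h \<le> cyc_offset N b a"
  by (auto simp: cyc_offset_def)

lemma cyc_offset_0_less_iff:
  "N = 2 * h \<Longrightarrow> b < N \<Longrightarrow> b \<noteq> h - 1 \<Longrightarrow> b \<noteq> N - 1 \<Longrightarrow>
     cyc_offset N b 0 < h \<longleftrightarrow> cyc_offset N b (N - 1) < h"
  unfolding cyc_offset_def by (cases "b = 0") auto

fun binval :: "'a \<Rightarrow> 'a list \<Rightarrow> nat" where
  "binval s [] = 0"
| "binval s (x # y) = (if x = s then 1 else 0) + 2 * binval s y"

lemma binval_less: "binval s x < 2 ^ length x"
  by (induction x) auto

lemma binval_append_single: "binval s (x @ [a]) = binval s x + (if a = s then 2 ^ length x else 0)"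
  by (induction x) auto

lemma binval_replicate_same: "binval s (replicate m s) + 1 = 2 ^ m"
  by (induction m) auto

lemma binval_replicate_other: "t \<noteq> s \<Longrightarrow> binval s (replicate m t) = 0"
  by (induction m) auto

lemma binval_inj:
  "length x = length y \<Longrightarrow> set x \<subseteq> {s,t} \<Longrightarrow> set y \<subseteq> {s,t} \<Longrightarrow> s \<noteq> t \<Longrightarrow>
     binval s x = binval s y \<Longrightarrow> x = y"
proof (induction x arbitrary: y)
  case (Cons a x)
  then obtain b y' where y: "y = b # y'" by (cases y) auto
  from Cons y have "a = b" by (auto split: if_splits) presburger+
  with Cons y show ?case by auto
qed simp

section \<open>Trees\<close>

lemma sym_und_edges: "sym (und_edges E)"
  by (auto simp: und_edges_def sym_def)

lemma sym_relpow: "sym R \<Longrightarrow> sym (R ^^ m)"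
proof (induction m)
  case (Suc m)
  show ?case
  proof (rule symI)
    fix x z assume "(x, z) \<in> R ^^ Suc m"
    then obtain y where "(x, y) \<in> R ^^ m" "(y, z) \<in> R" by (rule relpow_Suc_E)
    with Suc show "(z, x) \<in> R ^^ Suc m" by (meson relpow_Suc_I2 symD)
  qed
qed (simp add: sym_Id)

lemma connected_card_le_Suc_card_edges:
  assumes fin: "finite V" and FV: "F \<subseteq> V \<times> V" and r: "r \<in> V"
    and conn: "\<forall>x\<in>V. \<forall>y\<in>V. (x,y) \<in> (und_edges F)\<^sup>*"
  shows "card V \<le> card F + 1"
proof -
  let ?U = "und_edges F"
  define d where "d x = (LEAST m. (x, r) \<in> ?U ^^ m)" for x
  have d_path: "(x, r) \<in> ?U ^^ d x" if "x \<in> V" for x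
    unfolding d_def using conn r that by (meson LeastI_ex rtrancl_imp_relpow)
  have closer_nbr: "\<exists>y. (x, y) \<in> ?U \<and> d y < d x" if x: "x \<in> V - {r}" for x
  proof -
    have path: "(x, r) \<in> ?U ^^ d x" using x d_path by blast
    then obtain m where m: "d x = Suc m" using x by (cases "d x") auto
    then obtain y where "(x, y) \<in> ?U" "(y, r) \<in> ?U ^^ m"
      using relpow_Suc_D2[OF path[unfolded m]] by blast
    moreover have "d y \<le> m" unfolding d_def by (rule Least_le) fact
    ultimately show ?thesis using m by auto
  qed
  define p where "p x = (SOME y. (x, y) \<in> ?U \<and> d y < d x)" for x
  have p: "(x, p x) \<in> ?U \<and> d (p x) < d x" if "x \<in> V - {r}" for x
    unfolding p_def using someI_ex[OF closer_nbr[OF that]] .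
  txt \<open>Charge each vertex other than r with the edge to its parent p; no edge is charged twice.\<close>
  define h where "h x = (if (x, p x) \<in> F then (x, p x) else (p x, x))" for x
  have "h ` (V - {r}) \<subseteq> F" using p by (auto simp: h_def und_edges_def)
  moreover have "inj_on h (V - {r})"
  proof (rule inj_onI)
    fix x y assume x: "x \<in> V - {r}" and y: "y \<in> V - {r}" and "h x = h y"
    then have "x = y \<or> (x = p y \<and> y = p x)" by (auto simp: h_def split: if_splits)
    then show "x = y" using p[OF x] p[OF y] by auto
  qed
  moreover have "finite F" using FV fin by (meson finite_SigmaI finite_subset)
  ultimately have "card (V - {r}) \<le> card F" by (metis card_inj_on_le)
  then show ?thesis using r fin by (simp add: card_Diff_singleton)
qed

lemma oriented_tree_edge_separates:
  assumes tree: "oriented_tree V E" and st: "(s,t) \<in> E"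
  shows "(t, s) \<notin> (und_edges (E - {(s,t)}))\<^sup>*"
proof
  let ?U = "und_edges (E - {(s,t)})"
  assume ts: "(t, s) \<in> ?U\<^sup>*"
  have fin: "finite V" and EV: "E \<subseteq> V \<times> V" and card_E: "card E + 1 = card V"
    and conn: "\<forall>x\<in>V. \<forall>y\<in>V. (x,y) \<in> (und_edges E)\<^sup>*"
    using tree unfolding oriented_tree_def by auto
  have "(s, t) \<in> ?U\<^sup>*" using ts by (rule symD[OF sym_rtrancl[OF sym_und_edges]])
  with ts have "und_edges E \<subseteq> ?U\<^sup>*" unfolding und_edges_def by auto
  then have "(und_edges E)\<^sup>* \<subseteq> ?U\<^sup>*" by (metis rtrancl_subset_rtrancl)
  with conn have "\<forall>x\<in>V. \<forall>y\<in>V. (x,y) \<in> ?U\<^sup>*" by blast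
  moreover have "s \<in> V" using st EV by auto
  ultimately have "card V \<le> card (E - {(s,t)}) + 1"
    using connected_card_le_Suc_card_edges[OF fin] EV by blast
  moreover have "finite E" using EV fin by (meson finite_SigmaI finite_subset)
  moreover have "card E > 0" using \<open>finite E\<close> st by (auto simp: card_gt_0_iff)
  ultimately show False using st card_E by (simp add: card_Diff_singleton)
qed

definition tree_side :: "('a \<times> 'a) set \<Rightarrow> 'a \<Rightarrow> 'a \<Rightarrow> 'a \<Rightarrow> 'a" where
  "tree_side E s t a = (if (a, s) \<in> (und_edges (E - {(s,t)}))\<^sup>* then s else t)"

lemma tree_side_range: "tree_side E s t a \<in> {s, t}"
  by (simp add: tree_side_def)

lemma tree_side_source: "tree_side E s t s = s"
  by (simp add: tree_side_def)

lemma tree_side_target: "oriented_tree V E \<Longrightarrow> (s,t) \<in> E \<Longrightarrow> tree_side E s t t = t"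
  using oriented_tree_edge_separates by (force simp: tree_side_def)

lemma tree_side_edge:
  assumes "(p,q) \<in> E" "(p,q) \<noteq> (s,t)"
  shows "tree_side E s t p = tree_side E s t q"
proof -
  let ?U = "und_edges (E - {(s,t)})"
  have "(p,q) \<in> ?U" "(q,p) \<in> ?U" using assms by (auto simp: und_edges_def)
  then have "(p,s) \<in> ?U\<^sup>* \<longleftrightarrow> (q,s) \<in> ?U\<^sup>*" by (meson converse_rtrancl_into_rtrancl)
  then show ?thesis by (simp add: tree_side_def)
qed

section \<open>Connectivity of the Schreier graphs\<close>

lemma card_filter_not: "finite A \<Longrightarrow> card {x \<in> A. \<not> P x} = card A - card {x \<in> A. P x}"
proof -
  assume "finite A"
  moreover have "{x \<in> A. \<not> P x} = A - {x \<in> A. P x}" by auto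
  ultimately show ?thesis by (simp add: card_Diff_subset)
qed

lemma card_words: "finite V \<Longrightarrow> card (words V m) = card V ^ m"
  using card_lists_length_eq[of V m] by (simp add: words_def conj_commute)

lemma finite_words: "finite V \<Longrightarrow> finite (words V m)"
  using finite_lists_length_eq[of V m] by (simp add: words_def conj_commute)

lemma length_act [simp]: "length (act e z) = length z"
  by (induction e z rule: act.induct) auto

lemma act_in_words:
  assumes "(p,q) \<in> E" "E \<subseteq> V \<times> V" "z \<in> words V n"
  shows "act (p,q) z \<in> words V n"
proof -
  have "set z \<subseteq> V \<Longrightarrow> set (act (p,q) z) \<subseteq> V"
    using assms(1,2) by (induction "(p,q)" z rule: act.induct) auto
  then show ?thesis using assms(3) by (simp add: words_def)
qed

lemma sym_schreier_adj: "sym (schreier_adj V E n)"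
  by (auto simp: schreier_adj_def sym_def)

lemma schreier_adj_words: "(x,y) \<in> schreier_adj V E n \<Longrightarrow> x \<in> words V n \<and> y \<in> words V n"
  by (simp add: schreier_adj_def)

lemma schreier_adj_Cons_head:
  assumes "(p,q) \<in> E" "E \<subseteq> V \<times> V" "z \<in> words V n" "p \<noteq> q"
  shows "(p # z, q # z) \<in> schreier_adj V E (Suc n)"
proof -
  have "act (p,q) (q # z) = p # z" using assms(4) by simp
  moreover have "p \<in> V" "q \<in> V" using assms(1,2) by auto
  ultimately show ?thesis
    using assms(1,3) unfolding schreier_adj_def words_def by (auto intro!: bexI[of _ "(p,q)"])
qed

lemma schreier_rtrancl_Cons_head:
  assumes EV: "E \<subseteq> V \<times> V" and z: "z \<in> words V n"
  shows "(c,d) \<in> (und_edges E)\<^sup>* \<Longrightarrow> (c # z, d # z) \<in> (schreier_adj V E (Suc n))\<^sup>*"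
proof (induction rule: rtrancl_induct)
  case (step d0 d)
  have "(d0 # z, d # z) \<in> (schreier_adj V E (Suc n))\<^sup>*"
  proof (cases "d0 = d")
    case False
    with step(2) have "(d0, d) \<in> E \<or> (d, d0) \<in> E" by (auto simp: und_edges_def)
    then have "(d0 # z, d # z) \<in> schreier_adj V E (Suc n) \<or> (d # z, d0 # z) \<in> schreier_adj V E (Suc n)"
      using schreier_adj_Cons_head[OF _ EV z] False by auto
    then show ?thesis by (auto intro: symD[OF sym_schreier_adj])
  qed simp
  with step(3) show ?case by (rule rtrancl_trans)
qed simp

lemma schreier_adj_Cons_act:
  assumes "(p,q) \<in> E" "E \<subseteq> V \<times> V" "z \<in> words V n"
  shows "(p # z, q # act (p,q) z) \<in> schreier_adj V E (Suc n)"
proof -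
  have "act (p,q) (p # z) = q # act (p,q) z" by simp
  moreover have "p \<in> V" "q \<in> V" using assms(1,2) by auto
  moreover have "act (p,q) z \<in> words V n" using act_in_words[OF assms] .
  ultimately show ?thesis
    using assms(1,3) unfolding schreier_adj_def words_def by (auto intro!: bexI[of _ "(p,q)"])
qed

lemma schreier_adj_lift:
  assumes "(y1,y2) \<in> schreier_adj V E n" and EV: "E \<subseteq> V \<times> V"
  shows "\<exists>c\<in>V. \<exists>d\<in>V. (c # y1, d # y2) \<in> schreier_adj V E (Suc n)"
proof -
  obtain p q where pq: "(p,q) \<in> E" "act (p,q) y1 = y2 \<or> act (p,q) y2 = y1"
    and words: "y1 \<in> words V n" "y2 \<in> words V n"
    using assms(1) unfolding schreier_adj_def by auto
  have "p \<in> V" "q \<in> V" using pq(1) EV by auto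
  moreover have "(p # y1, q # y2) \<in> schreier_adj V E (Suc n) \<or> (q # y1, p # y2) \<in> schreier_adj V E (Suc n)"
    using pq(2) schreier_adj_Cons_act[OF pq(1) EV words(1)] schreier_adj_Cons_act[OF pq(1) EV words(2)]
    by (auto intro: symD[OF sym_schreier_adj])
  ultimately show ?thesis by blast
qed

lemma schreier_connected:
  assumes EV: "E \<subseteq> V \<times> V" and conn: "\<forall>x\<in>V. \<forall>y\<in>V. (x,y) \<in> (und_edges E)\<^sup>*"
  shows "x \<in> words V n \<Longrightarrow> y \<in> words V n \<Longrightarrow> (x,y) \<in> (schreier_adj V E n)\<^sup>*"
proof (induction n arbitrary: x y)
  case 0
  then show ?case by (simp add: words_def)
next
  case (Suc n)
  let ?R = "schreier_adj V E (Suc n)"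
  obtain a x' where x: "x = a # x'" "a \<in> V" "x' \<in> words V n"
    using Suc.prems(1) unfolding words_def by (cases x) auto
  obtain b y' where y: "y = b # y'" "b \<in> V" "y' \<in> words V n"
    using Suc.prems(2) unfolding words_def by (cases y) auto
  txt \<open>Lift a path from x' to y' edge by edge, moving the head letter along the tree in between.\<close>
  have "(x', z) \<in> (schreier_adj V E n)\<^sup>* \<Longrightarrow> \<forall>b\<in>V. (a # x', b # z) \<in> ?R\<^sup>*" for z
  proof (induction rule: rtrancl_induct)
    case base
    show ?case using schreier_rtrancl_Cons_head[OF EV x(3)] conn x(2) by blast
  next
    case (step z0 z1)
    obtain c d where cd: "c \<in> V" "d \<in> V" "(c # z0, d # z1) \<in> ?R"
      using schreier_adj_lift[OF step(2) EV] by blast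
    have "z1 \<in> words V n" using schreier_adj_words[OF step(2)] by simp
    then have "(d # z1, b # z1) \<in> ?R\<^sup>*" if "b \<in> V" for b
      using schreier_rtrancl_Cons_head[OF EV] conn cd(2) that by blast
    with step(3) cd show ?case by (meson rtrancl_into_rtrancl rtrancl_trans)
  qed
  then show ?case using Suc.IH[OF x(3) y(3)] x(1) y(1,2) by blast
qed

lemma sdist_path:
  "(u,v) \<in> (schreier_adj V E n)\<^sup>* \<Longrightarrow> (u,v) \<in> schreier_adj V E n ^^ sdist V E n u v"
  unfolding sdist_def by (meson LeastI_ex rtrancl_imp_relpow)

lemma sdist_le: "(u,v) \<in> schreier_adj V E n ^^ m \<Longrightarrow> sdist V E n u v \<le> m"
  unfolding sdist_def by (rule Least_le)

lemma sdist_sym: "sdist V E n u v = sdist V E n v u"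
proof -
  have "(u,v) \<in> schreier_adj V E n ^^ m \<longleftrightarrow> (v,u) \<in> schreier_adj V E n ^^ m" for m
    using symD[OF sym_relpow[OF sym_schreier_adj]] by blast
  then show ?thesis by (simp add: sdist_def)
qed

section \<open>Projection onto an e-cycle\<close>

lemma act_neq_hd:
  "act (p,q) z \<noteq> z \<Longrightarrow> z \<noteq> [] \<and> hd z \<in> {p,q} \<and> hd (act (p,q) z) \<in> {p,q}"
  by (cases z) (auto split: if_splits)

locale cycle_projection =
  fixes E :: "('a \<times> 'a) set" and s t :: 'a and side :: "'a \<Rightarrow> 'a" and w :: "'a list"
  assumes s_neq_t: "s \<noteq> t"
    and side_s [simp]: "side s = s" and side_t [simp]: "side t = t"
    and side_range: "side a \<in> {s, t}"
    and side_edge: "(p,q) \<in> E \<Longrightarrow> (p,q) \<noteq> (s,t) \<Longrightarrow> side p = side q"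
    and hd_w: "w \<noteq> [] \<Longrightarrow> hd w \<notin> {s, t}"
begin

definition in_cycle :: "nat \<Rightarrow> 'a list \<Rightarrow> bool" where
  "in_cycle m z \<longleftrightarrow> (\<exists>x. z = x @ w \<and> length x = m \<and> set x \<subseteq> {s,t})"

lemma in_cycle_0 [simp]: "in_cycle 0 z \<longleftrightarrow> z = w"
  by (auto simp: in_cycle_def)

lemma not_in_cycle_Suc_Nil [simp]: "\<not> in_cycle (Suc m) []"
  by (auto simp: in_cycle_def)

lemma in_cycle_Suc_Cons [simp]: "in_cycle (Suc m) (a # z) \<longleftrightarrow> a \<in> {s,t} \<and> in_cycle m z"
proof
  assume "in_cycle (Suc m) (a # z)"
  then obtain x where "a # z = x @ w" "length x = Suc m" "set x \<subseteq> {s,t}"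
    by (auto simp: in_cycle_def)
  then show "a \<in> {s,t} \<and> in_cycle m z"
    by (cases x) (auto simp: in_cycle_def)
next
  assume "a \<in> {s,t} \<and> in_cycle m z"
  then show "in_cycle (Suc m) (a # z)"
    unfolding in_cycle_def by (metis Cons_eq_appendI insert_subset length_Cons list.simps(15))
qed

lemma side_eq_self_iff: "side a = a \<longleftrightarrow> a \<in> {s,t}"
  using side_range[of a] by auto

text \<open>The vertex of the cycle \<open>{s,t}\<^sup>m w\<close> nearest to z (lemma sdist_via_proj). A letter
  changes only together with all letters before it, which must be endpoints of the acting edge;
  so if the tail of z is not yet on the cycle, the head letter ends up on the side of the first
  letter of the projected tail.\<close>
fun proj :: "nat \<Rightarrow> 'a list \<Rightarrow> 'a list" where
  "proj 0 z = w"
| "proj (Suc m) [] = replicate (Suc m) s @ w"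
| "proj (Suc m) (a # z) = (if in_cycle m z then side a else side (hd (proj m z))) # proj m z"

lemma proj_eq_self_iff: "proj m z = z \<longleftrightarrow> in_cycle m z"
proof (induction m arbitrary: z)
  case (Suc m)
  then show ?case by (cases z) (auto simp: side_eq_self_iff)
qed auto

lemma proj_in_cycle: "in_cycle m z \<Longrightarrow> proj m z = z"
  by (simp add: proj_eq_self_iff)

lemma in_cycle_replicate: "b \<in> {s,t} \<Longrightarrow> in_cycle m (replicate m b @ w)"
  by (induction m) auto

lemma in_cycle_proj: "in_cycle m (proj m z)"
proof (induction m arbitrary: z)
  case (Suc m)
  then show ?case
    using side_range by (cases z) (auto simp: in_cycle_replicate simp del: replicate_Suc)
qed simp

lemma proj_act_other:
  assumes pq: "(p,q) \<in> E" "(p,q) \<noteq> (s,t)"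
  shows "proj m (act (p,q) z) = proj m z"
proof (induction m arbitrary: z)
  case (Suc m)
  have side_pq: "side p = side q" using side_edge[OF pq] .
  show ?case
  proof (cases z)
    case (Cons a z')
    let ?z'' = "act (p,q) z'"
    have tail: "proj m ?z'' = proj m z'" using Suc.IH .
    have "side (hd (proj m z')) = side p"
      if moved: "?z'' \<noteq> z'" and "in_cycle m z' \<or> in_cycle m ?z''"
    proof -
      have "proj m z' = z' \<or> proj m z' = ?z''"
        using that(2) tail proj_eq_self_iff[of m z'] proj_eq_self_iff[of m ?z''] by auto
      then show ?thesis using act_neq_hd[OF moved] side_pq by auto
    qed
    then show ?thesis
      using Cons tail side_pq by (cases "?z'' = z'") auto
  qed simp
qed simp

lemma act_w: "act (s,t) w = w"
  using hd_w by (cases w) auto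

lemma act_eq_w_iff: "act (s,t) z = w \<longleftrightarrow> z = w"
proof
  show "act (s,t) z = w \<Longrightarrow> z = w" using hd_w by (cases z) (auto split: if_splits)
qed (simp add: act_w)

lemma in_cycle_act_iff: "in_cycle m (act (s,t) z) \<longleftrightarrow> in_cycle m z"
proof (induction m arbitrary: z)
  case 0
  show ?case by (simp add: act_eq_w_iff)
next
  case (Suc m)
  then show ?case using s_neq_t by (cases z) auto
qed

lemma proj_act_edge: "proj m (act (s,t) z) = proj m z \<or> in_cycle m z"
proof (induction m arbitrary: z)
  case (Suc m)
  show ?case
  proof (cases z)
    case (Cons a z')
    then show ?thesis using Suc.IH[of z'] s_neq_t by (auto simp: in_cycle_act_iff)
  qed simp
qed simp

text \<open>Reading a word over \<open>{s,t}\<close> as a binary numeral with least significant digit first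
  and digit 1 for s, the edge (s,t) acts on the cycle as the odometer \<open>x \<mapsto> x + 1\<close>.\<close>
lemma act_append_w:
  "set x \<subseteq> {s,t} \<Longrightarrow> \<exists>y. act (s,t) (x @ w) = y @ w \<and> length y = length x \<and> set y \<subseteq> {s,t}
     \<and> binval s y = Suc (binval s x) mod 2 ^ length x"
proof (induction x)
  case Nil
  then show ?case using act_w by simp
next
  case (Cons a x)
  then obtain y where y: "act (s,t) (x @ w) = y @ w" "length y = length x" "set y \<subseteq> {s,t}"
    "binval s y = Suc (binval s x) mod 2 ^ length x" by auto
  show ?case
  proof (cases "a = s")
    case True
    then have "binval s (t # y) = Suc (binval s (a # x)) mod 2 ^ length (a # x)"
      using s_neq_t y(4) by (simp add: mult_mod_right)
    then show ?thesis using True y by (intro exI[of _ "t # y"]) auto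
  next
    case False
    then have "binval s (s # x) = Suc (binval s (a # x)) mod 2 ^ length (a # x)"
      using binval_less[of s x] by simp
    then show ?thesis using False Cons.prems by (intro exI[of _ "s # x"]) auto
  qed
qed

lemma proj_eq_replicate:
  "1 \<le> m \<Longrightarrow> length z = m + length w \<Longrightarrow> drop (m - 1) z \<notin> {s # w, t # w} \<Longrightarrow>
     \<exists>b\<in>{s,t}. proj m z = replicate m b @ w"
proof (induction m arbitrary: z rule: nat_induct_at_least)
  case base
  then obtain c r where "z = c # r" by (cases z) auto
  then show ?case using side_range by auto
next
  case (Suc m)
  then obtain c r where z: "z = c # r" by (cases z) auto
  have off: "drop (m - 1) r \<notin> {s # w, t # w}" using Suc.prems(2) z Suc.hyps by (cases m) auto
  moreover have "length r = m + length w" using Suc.prems(1) z by simp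
  ultimately obtain b where b: "b \<in> {s,t}" "proj m r = replicate m b @ w"
    using Suc.IH by blast
  have "\<not> in_cycle m r"
  proof
    assume "in_cycle m r"
    then have "r = replicate m b @ w" by (metis b(2) proj_eq_self_iff)
    then have "drop (m - 1) r = b # w" using Suc.hyps by simp
    then show False using off b(1) by auto
  qed
  moreover have "hd (replicate m b @ w) = b" using Suc.hyps by (cases m) auto
  ultimately show ?case using b z by auto
qed

lemma in_cycle_append: "in_cycle (length y + m) (y @ z) \<longleftrightarrow> set y \<subseteq> {s,t} \<and> in_cycle m z"
  by (induction y) auto

text \<open>The first \<open>length y\<close> letters of the projection of \<open>y @ a # w\<close>, which do not depend
  on \<open>a \<in> {s,t}\<close> (lemma proj_append_Cons).\<close>
fun proj_prefix :: "'a list \<Rightarrow> 'a list" where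
  "proj_prefix [] = []"
| "proj_prefix (c # y) =
     (if set y \<subseteq> {s,t} then side c else side (hd (proj_prefix y))) # proj_prefix y"

lemma length_proj_prefix [simp]: "length (proj_prefix y) = length y"
  by (induction y) auto

lemma proj_append_Cons:
  "a \<in> {s,t} \<Longrightarrow> proj (Suc (length y)) (y @ a # w) = proj_prefix y @ a # w"
proof (induction y)
  case Nil
  then show ?case using side_eq_self_iff by auto
next
  case (Cons c y)
  have "in_cycle (Suc (length y)) (y @ a # w) \<longleftrightarrow> set y \<subseteq> {s,t}"
    using in_cycle_append[of y 1 "a # w"] Cons.prems by simp
  moreover have "\<not> set y \<subseteq> {s,t} \<Longrightarrow> hd (proj_prefix y @ a # w) = hd (proj_prefix y)"
    by (metis empty_subsetI hd_append2 length_0_conv length_proj_prefix list.set(1))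
  ultimately show ?case using Cons by auto
qed

end

section \<open>Distances to an e-cycle\<close>

locale schreier_cycle =
  fixes V :: "'a set" and E :: "('a \<times> 'a) set" and s t :: 'a and w :: "'a list" and n i :: nat
  assumes tree: "oriented_tree V E" and st_edge: "(s,t) \<in> E"
    and i_pos: "1 \<le> i" and i_le_n: "i \<le> n"
    and length_w: "length w = n - i" and set_w: "set w \<subseteq> V"
    and hd_w_notin: "w \<noteq> [] \<Longrightarrow> hd w \<notin> {s,t}"
begin

lemma E_subset: "E \<subseteq> V \<times> V"
  using tree by (simp add: oriented_tree_def)

lemma s_in_V: "s \<in> V" and t_in_V: "t \<in> V"
  using st_edge E_subset by auto

lemma finite_V: "finite V"
  using tree by (simp add: oriented_tree_def)

sublocale cycle_projection E s t "tree_side E s t" w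
proof
  show "s \<noteq> t" using tree st_edge by (auto simp: oriented_tree_def)
  show "tree_side E s t t = t" using tree st_edge by (rule tree_side_target)
  show "tree_side E s t a \<in> {s,t}" for a by (rule tree_side_range)
  show "w \<noteq> [] \<Longrightarrow> hd w \<notin> {s,t}" by (rule hd_w_notin)
qed (auto simp: tree_side_source tree_side_edge)

lemma schreier_rtrancl:
  "x \<in> words V n \<Longrightarrow> y \<in> words V n \<Longrightarrow> (x,y) \<in> (schreier_adj V E n)\<^sup>*"
  using schreier_connected[OF E_subset] tree by (simp add: oriented_tree_def)

lemma sdist_self [simp]: "sdist V E n x x = 0"
  using sdist_le[of x x 0] by simp

definition cycle_pos :: "'a list \<Rightarrow> nat" where
  "cycle_pos c = binval s (take i c)"

lemma cycle_pos_append: "length x = i \<Longrightarrow> cycle_pos (x @ r) = binval s x"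
  by (simp add: cycle_pos_def)

lemma in_cycle_words: "in_cycle i c \<Longrightarrow> c \<in> words V n"
  using s_in_V t_in_V set_w length_w i_le_n by (auto simp: in_cycle_def words_def)

lemma cycle_pos_less: "in_cycle i c \<Longrightarrow> cycle_pos c < 2 ^ i"
  using binval_less by (auto simp: in_cycle_def cycle_pos_def)

lemma cycle_pos_inj:
  "in_cycle i c \<Longrightarrow> in_cycle i c' \<Longrightarrow> cycle_pos c = cycle_pos c' \<Longrightarrow> c = c'"
  using binval_inj[OF _ _ _ s_neq_t] by (auto simp: in_cycle_def cycle_pos_def)

lemma cycle_pos_act:
  assumes "in_cycle i c"
  shows "cycle_pos (act (s,t) c) = Suc (cycle_pos c) mod 2 ^ i"
proof -
  obtain x where x: "c = x @ w" "length x = i" "set x \<subseteq> {s,t}"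
    using assms by (auto simp: in_cycle_def)
  then obtain y where "act (s,t) c = y @ w" "length y = i" "binval s y = Suc (binval s x) mod 2 ^ i"
    using act_append_w by blast
  then show ?thesis using x by (simp add: cycle_pos_append)
qed

lemma schreier_adj_act_cycle: "in_cycle i c \<Longrightarrow> (c, act (s,t) c) \<in> schreier_adj V E n"
  using in_cycle_words in_cycle_act_iff st_edge by (auto simp: schreier_adj_def)

lemma cycle_funpow_act:
  assumes "in_cycle i c"
  shows "(c, (act (s,t) ^^ j) c) \<in> schreier_adj V E n ^^ j \<and> in_cycle i ((act (s,t) ^^ j) c)
    \<and> cycle_pos ((act (s,t) ^^ j) c) = (cycle_pos c + j) mod 2 ^ i"
proof (induction j)
  case 0
  then show ?case using assms cycle_pos_less by simp
next
  case (Suc j)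
  then show ?case
    using relpow_Suc_I schreier_adj_act_cycle in_cycle_act_iff cycle_pos_act
    by (auto simp: mod_Suc_eq)
qed

lemma sdist_cycle_le:
  assumes c: "in_cycle i c" and c': "in_cycle i c'"
  shows "sdist V E n c c' \<le> cyc_dist (2 ^ i) (cycle_pos c) (cycle_pos c')"
proof -
  have "sdist V E n x y \<le> cyc_offset (2 ^ i) (cycle_pos y) (cycle_pos x)"
    if x: "in_cycle i x" and y: "in_cycle i y" for x y
  proof -
    let ?j = "cyc_offset (2 ^ i) (cycle_pos y) (cycle_pos x)"
    have "cycle_pos ((act (s,t) ^^ ?j) x) = cycle_pos y"
      using cycle_funpow_act[OF x] add_cyc_offset_mod cycle_pos_less x y by simp
    then have "(act (s,t) ^^ ?j) x = y" using cycle_funpow_act[OF x] cycle_pos_inj y by blast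
    then show ?thesis using cycle_funpow_act[OF x] sdist_le by metis
  qed
  moreover have "sdist V E n c c' = sdist V E n c' c" by (rule sdist_sym)
  ultimately show ?thesis unfolding cyc_dist_def using c c' by fastforce
qed

lemma schreier_adj_proj:
  assumes "(z,y) \<in> schreier_adj V E n"
  shows "proj i z = proj i y \<or>
    in_cycle i z \<and> in_cycle i y \<and> (y = act (s,t) z \<or> z = act (s,t) y)"
proof -
  obtain p q where pq: "(p,q) \<in> E" "act (p,q) z = y \<or> act (p,q) y = z"
    using assms unfolding schreier_adj_def by auto
  show ?thesis
  proof (cases "(p,q) = (s,t)")
    case True
    then show ?thesis using pq(2) proj_act_edge[of i z] proj_act_edge[of i y] in_cycle_act_iff
      by auto
  next
    case False
    then show ?thesis using pq proj_act_other by auto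
  qed
qed

lemma sdist_proj_plus_cyc_dist_le:
  "(z,c) \<in> schreier_adj V E n ^^ m \<Longrightarrow> in_cycle i c \<Longrightarrow>
     sdist V E n z (proj i z) + cyc_dist (2 ^ i) (cycle_pos (proj i z)) (cycle_pos c) \<le> m"
proof (induction m arbitrary: z)
  case 0
  then show ?case using proj_in_cycle[of i c] by simp
next
  case (Suc m)
  obtain y where zy: "(z,y) \<in> schreier_adj V E n" and yc: "(y,c) \<in> schreier_adj V E n ^^ m"
    using relpow_Suc_D2[OF Suc.prems(1)] by blast
  have IH: "sdist V E n y (proj i y) + cyc_dist (2 ^ i) (cycle_pos (proj i y)) (cycle_pos c) \<le> m"
    using Suc.IH[OF yc Suc.prems(2)] .
  from schreier_adj_proj[OF zy] show ?case
  proof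
    assume same: "proj i z = proj i y"
    have "y \<in> words V n" "proj i y \<in> words V n"
      using schreier_adj_words[OF zy] in_cycle_words[OF in_cycle_proj] by auto
    then have "(y, proj i y) \<in> schreier_adj V E n ^^ sdist V E n y (proj i y)"
      using sdist_path schreier_rtrancl by blast
    then have "sdist V E n z (proj i z) \<le> Suc (sdist V E n y (proj i y))"
      unfolding same by (rule sdist_le[OF relpow_Suc_I2[OF zy]])
    then show ?case using IH same by simp
  next
    assume on_cycle: "in_cycle i z \<and> in_cycle i y \<and> (y = act (s,t) z \<or> z = act (s,t) y)"
    then have step: "cyc_dist (2 ^ i) (cycle_pos z) (cycle_pos c)
        \<le> Suc (cyc_dist (2 ^ i) (cycle_pos y) (cycle_pos c))"
      using cyc_dist_Suc_mod_le[OF _ cycle_pos_less[OF Suc.prems(2)]] cycle_pos_act cycle_pos_less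
      by (elim conjE disjE) simp_all
    have "proj i z = z" "proj i y = y" using on_cycle proj_in_cycle by auto
    then show ?case using IH step by simp
  qed
qed

lemma sdist_via_proj:
  assumes z: "z \<in> words V n" and c: "in_cycle i c"
  shows "sdist V E n z c = sdist V E n z (proj i z) + cyc_dist (2 ^ i) (cycle_pos (proj i z)) (cycle_pos c)"
proof (rule antisym)
  have cz: "c \<in> words V n" "proj i z \<in> words V n"
    using in_cycle_words c in_cycle_proj by auto
  have "(z, c) \<in> schreier_adj V E n ^^ (sdist V E n z (proj i z) + sdist V E n (proj i z) c)"
    using sdist_path schreier_rtrancl z cz relpow_trans by metis
  then have "sdist V E n z c \<le> sdist V E n z (proj i z) + sdist V E n (proj i z) c"
    by (rule sdist_le)
  also have "\<dots> \<le> sdist V E n z (proj i z) + cyc_dist (2 ^ i) (cycle_pos (proj i z)) (cycle_pos c)"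
    using sdist_cycle_le[OF in_cycle_proj c] by simp
  finally show "sdist V E n z c \<le> \<dots>" .
  show "\<dots> \<le> sdist V E n z c"
    using sdist_proj_plus_cyc_dist_le[OF sdist_path c] schreier_rtrancl z cz by blast
qed

lemma cycle_pos_replicate:
  "cycle_pos (replicate i s @ w) = 2 ^ i - 1" "cycle_pos (replicate i t @ w) = 0"
  using binval_replicate_same[of s i] binval_replicate_other[OF s_neq_t[symmetric]]
  by (simp_all add: cycle_pos_append)

lemma cycle_pos_replicate_Cons:
  "cycle_pos (replicate (i - 1) s @ [t] @ w) = 2 ^ (i - 1) - 1"
  "cycle_pos (replicate (i - 1) t @ [s] @ w) = 2 ^ (i - 1)"
proof -
  have "length (replicate (i - 1) a @ [b]) = i" for a b :: 'a using i_pos by simp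
  then show "cycle_pos (replicate (i - 1) s @ [t] @ w) = 2 ^ (i - 1) - 1"
    and "cycle_pos (replicate (i - 1) t @ [s] @ w) = 2 ^ (i - 1)"
    using binval_replicate_same[of s "i - 1"] binval_replicate_other[OF s_neq_t[symmetric]] s_neq_t
    by (simp_all only: append_assoc[symmetric] cycle_pos_append) (simp_all add: binval_append_single)
qed

lemma cycle_pos_proj_append_Cons:
  assumes "length y = i - 1" "a \<in> {s,t}"
  shows "cycle_pos (proj i (y @ a # w)) = binval s (proj_prefix y) + (if a = s then 2 ^ (i - 1) else 0)"
proof -
  have "proj i (y @ a # w) = (proj_prefix y @ [a]) @ w"
    using proj_append_Cons[OF assms(2), of y] assms(1) i_pos by simp
  moreover have "length (proj_prefix y @ [a]) = i" using assms(1) i_pos by simp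
  ultimately have "cycle_pos (proj i (y @ a # w)) = binval s (proj_prefix y @ [a])"
    by (metis cycle_pos_append)
  then show ?thesis using assms(1) by (simp add: binval_append_single)
qed

lemma proj_cases:
  assumes "z \<in> words V n"
  obtains y a where "z = y @ a # w" "a \<in> {s,t}" "length y = i - 1"
    | "cycle_pos (proj i z) \<in> {0, 2 ^ i - 1}"
proof (cases "drop (i - 1) z \<in> {s # w, t # w}")
  case True
  then obtain a where "a \<in> {s,t}" "drop (i - 1) z = a # w" by auto
  moreover have "length (take (i - 1) z) = i - 1" using assms i_le_n by (simp add: words_def)
  ultimately show ?thesis using that(1) by (metis append_take_drop_id)
next
  case False
  moreover have "length z = i + length w" using assms length_w i_le_n by (simp add: words_def)
  ultimately obtain b where "b \<in> {s,t}" "proj i z = replicate i b @ w"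
    using proj_eq_replicate i_pos by blast
  then show ?thesis using that(2) cycle_pos_replicate by auto
qed

text \<open>The projections of \<open>y @ s # w\<close> and \<open>y @ t # w\<close> are antipodal on the cycle, so for
  each y exactly one of them is counted; every other word projects to position 0 or \<open>2 ^ i - 1\<close>.\<close>
lemma card_cycle_pos_proj:
  assumes not_ends: "\<not> G 0" "\<not> G (2 ^ i - 1)"
    and antipodal: "\<And>a. a < 2 ^ (i - 1) \<Longrightarrow> G a \<longleftrightarrow> \<not> G (a + 2 ^ (i - 1))"
  shows "card {z \<in> words V n. G (cycle_pos (proj i z))} = card V ^ (i - 1)"
proof -
  define letter where "letter y = (if G (binval s (proj_prefix y) + 2 ^ (i - 1)) then s else t)" for y
  define extend where "extend y = y @ letter y # w" for y
  have letter: "letter y \<in> {s,t}" for y by (simp add: letter_def)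
  have G_extend: "G (cycle_pos (proj i (y @ a # w))) \<longleftrightarrow> a = letter y"
    if "length y = i - 1" "a \<in> {s,t}" for y a
  proof -
    have "binval s (proj_prefix y) < 2 ^ (i - 1)" using binval_less[of s "proj_prefix y"] that(1) by simp
    then show ?thesis
      using that antipodal s_neq_t by (auto simp: cycle_pos_proj_append_Cons letter_def)
  qed
  have "{z \<in> words V n. G (cycle_pos (proj i z))} = extend ` words V (i - 1)"
  proof (intro equalityI subsetI)
    fix z assume "z \<in> {z \<in> words V n. G (cycle_pos (proj i z))}"
    then have z: "z \<in> words V n" and G: "G (cycle_pos (proj i z))" by auto
    then show "z \<in> extend ` words V (i - 1)"
    proof (cases rule: proj_cases)
      case (1 y a)
      then have "y \<in> words V (i - 1)" using z by (auto simp: words_def)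
      moreover have "z = extend y" using 1 G G_extend by (simp add: extend_def)
      ultimately show ?thesis by blast
    next
      case 2
      then show ?thesis using G not_ends by auto
    qed
  next
    fix z assume "z \<in> extend ` words V (i - 1)"
    then obtain y where y: "y \<in> words V (i - 1)" "z = extend y" by blast
    then have "z \<in> words V n"
      using letter[of y] s_in_V t_in_V set_w length_w i_pos i_le_n by (auto simp: words_def extend_def)
    moreover have "G (cycle_pos (proj i z))"
      using y G_extend letter by (simp add: words_def extend_def)
    ultimately show "z \<in> {z \<in> words V n. G (cycle_pos (proj i z))}" by blast
  qed
  moreover have "inj_on extend (words V (i - 1))"
    by (rule inj_onI) (auto simp: extend_def words_def)
  ultimately show ?thesis using card_image card_words[OF finite_V] by metis
qed

lemma in_cycle_replicate_Cons:
  "a \<in> {s,t} \<Longrightarrow> b \<in> {s,t} \<Longrightarrow> in_cycle i (replicate (i - 1) a @ [b] @ w)"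
  using in_cycle_append[of "replicate (i - 1) a" 1 "b # w"] i_pos by auto

lemma two_pow_eq_double: "(2::nat) ^ i = 2 * 2 ^ (i - 1)"
  using i_pos by (cases i) auto

text \<open>Since \<open>2 ^ i\<close> is even, no word is equidistant from u and v, and the words closer to u are
  those projecting into the half of the cycle ending at u.\<close>
lemma ncloser_act_eq_card:
  assumes u: "in_cycle i u" and v: "v = act (s,t) u"
  defines "closer z \<equiv> cyc_offset (2 ^ i) (cycle_pos u) (cycle_pos (proj i z)) < 2 ^ (i - 1)"
  shows "ncloser V E n u v = card {z \<in> words V n. closer z}"
    and "ncloser V E n v u = card {z \<in> words V n. \<not> closer z}"
proof -
  have v_cycle: "in_cycle i v" using u v in_cycle_act_iff by simp
  have pos_v: "cycle_pos v = Suc (cycle_pos u) mod 2 ^ i" using cycle_pos_act[OF u] v by simp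
  note less_iff = cyc_dist_Suc_mod_less_iff[OF two_pow_eq_double cycle_pos_less[OF in_cycle_proj]
      cycle_pos_less[OF u]]
  show "ncloser V E n u v = card {z \<in> words V n. closer z}"
    using sdist_via_proj[OF _ u] sdist_via_proj[OF _ v_cycle] pos_v less_iff(1)
    unfolding ncloser_def closer_def by (auto intro!: arg_cong[where f = card])
  show "ncloser V E n v u = card {z \<in> words V n. \<not> closer z}"
    using sdist_via_proj[OF _ u] sdist_via_proj[OF _ v_cycle] pos_v less_iff(2)
    unfolding ncloser_def closer_def by (auto intro!: arg_cong[where f = card])
qed

lemma cycle_pos_not_special_edge:
  assumes u: "in_cycle i u" and v: "v = act (s,t) u"
    and not_e: "{u,v} \<noteq> {replicate i s @ w, replicate i t @ w}"
    and not_e': "{u,v} \<noteq> {replicate (i - 1) s @ [t] @ w, replicate (i - 1) t @ [s] @ w}"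
  shows "cycle_pos u \<noteq> 2 ^ i - 1" and "cycle_pos u \<noteq> 2 ^ (i - 1) - 1"
proof -
  have v_cycle: "in_cycle i v" using u v in_cycle_act_iff by simp
  have pos_v: "cycle_pos v = Suc (cycle_pos u) mod 2 ^ i" using cycle_pos_act[OF u] v by simp
  show "cycle_pos u \<noteq> 2 ^ i - 1"
  proof
    assume "cycle_pos u = 2 ^ i - 1"
    then have "u = replicate i s @ w" and "v = replicate i t @ w"
      using cycle_pos_inj[OF u in_cycle_replicate] cycle_pos_inj[OF v_cycle in_cycle_replicate]
        cycle_pos_replicate pos_v by auto
    with not_e show False by simp
  qed
  show "cycle_pos u \<noteq> 2 ^ (i - 1) - 1"
  proof
    assume "cycle_pos u = 2 ^ (i - 1) - 1"
    then have "u = replicate (i - 1) s @ [t] @ w" and "v = replicate (i - 1) t @ [s] @ w"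
      using cycle_pos_inj[OF u in_cycle_replicate_Cons] cycle_pos_inj[OF v_cycle in_cycle_replicate_Cons]
        cycle_pos_replicate_Cons pos_v two_pow_eq_double by auto
    with not_e' show False by simp
  qed
qed

lemma ncloser_mult_ncloser:
  assumes u: "in_cycle i u" and v: "v = act (s,t) u"
    and not_e: "{u,v} \<noteq> {replicate i s @ w, replicate i t @ w}"
    and not_e': "{u,v} \<noteq> {replicate (i - 1) s @ [t] @ w, replicate (i - 1) t @ [s] @ w}"
  shows "ncloser V E n u v * ncloser V E n v u = card V ^ (i - 1) * (card V ^ n - card V ^ (i - 1))"
proof -
  define G where "G a \<longleftrightarrow> cyc_offset (2 ^ i) (cycle_pos u) a < 2 ^ (i - 1)" for a
  have pos_u: "cycle_pos u < 2 ^ i" using cycle_pos_less[OF u] .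
  have ends: "G 0 \<longleftrightarrow> G (2 ^ i - 1)"
    using cyc_offset_0_less_iff[OF two_pow_eq_double pos_u] cycle_pos_not_special_edge[OF assms]
    by (simp add: G_def)
  have antipodal: "G a \<longleftrightarrow> \<not> G (a + 2 ^ (i - 1))" if "a < 2 ^ (i - 1)" for a
    using cyc_offset_add_half_less_iff[OF two_pow_eq_double that pos_u] by (auto simp: G_def)
  have card_not: "card {z \<in> words V n. \<not> P z} = card V ^ n - card {z \<in> words V n. P z}" for P
    using card_filter_not[OF finite_words[OF finite_V]] card_words[OF finite_V] by metis
  note ncloser = ncloser_act_eq_card[OF u v, folded G_def]
  show ?thesis
  proof (cases "G 0")
    case True
    then have "card {z \<in> words V n. \<not> G (cycle_pos (proj i z))} = card V ^ (i - 1)"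
      using card_cycle_pos_proj[of "\<lambda>a. \<not> G a"] ends antipodal by auto
    then show ?thesis using ncloser card_not[of "\<lambda>z. \<not> G (cycle_pos (proj i z))"] by simp
  next
    case False
    then have "card {z \<in> words V n. G (cycle_pos (proj i z))} = card V ^ (i - 1)"
      using card_cycle_pos_proj[of G] ends antipodal by auto
    then show ?thesis using ncloser card_not[of "\<lambda>z. G (cycle_pos (proj i z))"] by simp
  qed
qed

end

theorem lemma5p4:
  fixes V :: "'a set" and E :: "('a \<times> 'a) set" and k n i :: nat
    and s t :: 'a and x w u v :: "'a list"
  assumes "oriented_tree V E" and "card V = k" and "n \<ge> 1"
    and "(s,t) \<in> E"
    and "2 \<le> i" and "i \<le> n"
    and "length x = i" and "set x \<subseteq> {s,t}"
    and "length w = n - i" and "set w \<subseteq> V" and "w \<noteq> [] \<Longrightarrow> hd w \<notin> {s,t}"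
    and "u = x @ w" and "v = act (s,t) u"
    and "{u,v} \<noteq> {replicate i s @ w, replicate i t @ w}"
    and "{u,v} \<noteq> {replicate (i-1) s @ [t] @ w, replicate (i-1) t @ [s] @ w}"
  shows "ncloser V E n u v * ncloser V E n v u = k^(i-1) * (k^n - k^(i-1))"
proof -
  txt \<open>Only \<open>1 \<le> i\<close> is needed: for i = 1 the edges \<open>e\<^sub>C\<close> and \<open>e\<^sub>C'\<close> make up the
    whole cycle, so the last two hypotheses cannot hold.\<close>
  interpret schreier_cycle V E s t w n i
    using assms by unfold_locales auto
  have "in_cycle i u" using assms(7,8,12) by (auto simp: in_cycle_def)
  then show ?thesis using ncloser_mult_ncloser assms(2,13-15) by blast
qed

end
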